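(* For any $\mu>-1$ and $0<x<2\pi$ the following identities (with $x$-independent right-hand sides) hold: \[ \Im\big(e^{ix\mu}L(x,\mu)\big)+\int_0^{x}\frac{\sin(\mu+\frac{1}{2})y}{2\sin \frac{y}{2}}\,dy=\frac{\pi}{2} \] and \[ \Re\big(e^{ix\mu}L(x,\mu)\big)-\int_x^\pi\frac{\cos(\mu+\frac{1}{2})y\,dy}{2\sin\frac{y}{2}} =\Re\big(e^{i\pi\mu}T(\pi,\mu)\big)=-\mathrm{S}_{\pi/2}(2\mu+1)\,\cos\pi\mu . \]
   Context: $L(x,\mu)=\sum_{k=1}^\infty \frac{e^{ikx}}{k+\mu}$, with real part the cosine FJ sum $T(x,\mu)=\sum_{k=1}^\infty\frac{\cos kx}{k+\mu}$. The special value $\mathrm{S}_{\pi/2}(\lambda)=2\sum_{k=1}^\infty \frac{(-1)^{k-1}}{2k-1+\lambda}=-T\left(\pi,\frac{\lambda-1}{2}\right)$ (equivalently the imaginary part of $2\sum_{k\ge1}\frac{e^{(2k-1)i\pi/2}}{2k-1+\lambda}$). *)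

theory Defs
  imports "HOL-Analysis.Analysis"
begin

definition FJ_L :: "real \<Rightarrow> real \<Rightarrow> complex" where
  "FJ_L x \<mu> = (\<Sum>k. exp (\<i> * of_real (real (Suc k) * x)) / of_real (real (Suc k) + \<mu>))"

definition FJ_T :: "real \<Rightarrow> real \<Rightarrow> real" where
  "FJ_T x \<mu> = (\<Sum>k. cos (real (Suc k) * x) / (real (Suc k) + \<mu>))"

text \<open>S_{pi/2}(lambda) = 2 sum_{k>=1} (-1)^(k-1)/(2k-1+lambda), reindexed from k = 0.\<close>
definition S_half_pi :: "real \<Rightarrow> real" where
  "S_half_pi lam = 2 * (\<Sum>k. (-1) ^ k / (2 * real k + 1 + lam))"

end

theory Submission
  imports Defs "HOL-Probability.Sinc_Integral"
begin

text \<open>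
  The partial sums of \<open>exp (i x \<mu>) L(x,\<mu>)\<close> are \<open>\<Sum>k<N. exp (i (k+1+\<mu>) x) / (k+1+\<mu>)\<close>;
  their real and imaginary parts are the values at \<open>\<theta> = pi/2\<close> and \<open>\<theta> = 0\<close> of
  \<open>shifted_sine_sum \<mu> \<theta> N x\<close>. The derivative in \<open>x\<close> telescopes to
  \<open>(sin ((N+\<mu>+1/2) x + \<theta>) - sin ((\<mu>+1/2) x + \<theta>)) / (2 sin (x/2))\<close>, so on a compact
  subinterval of \<open>(0, 2 pi)\<close> the Riemann-Lebesgue lemma turns the increments of the partial
  sums into integrals of the \<open>N\<close>-independent term. For the real part we integrate from \<open>pi\<close>,
  where the series is \<open>cos (pi \<mu>)\<close> times the alternating series \<open>T(pi,\<mu>)\<close>.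
  The imaginary part vanishes at \<open>0\<close>, but \<open>1 / sin (x/2)\<close> is not integrable there:
  subtracting the case \<open>\<mu> = 0\<close> leaves the weight \<open>sin (\<mu> y/2) / sin (y/2)\<close>, which extends
  continuously to \<open>y = 0\<close>, and the case \<open>\<mu> = 0\<close> is the classical
  \<open>\<Sum>k\<ge>1. sin (k x) / k = (pi - x) / 2\<close>, read off from the increment between \<open>x\<close> and \<open>pi\<close>.
\<close>

lemma integral_mult_cos_bound:
  fixes f f' :: "real \<Rightarrow> real"
  assumes ab: "a \<le> b"
    and f': "\<And>y. y \<in> {a..b} \<Longrightarrow> (f has_real_derivative f' y) (at y within {a..b})"
    and cont_f': "continuous_on {a..b} f'"
  obtains C where "\<And>M. M > 0 \<Longrightarrow> \<bar>integral {a..b} (\<lambda>y. f y * cos (M * y + \<theta>))\<bar> \<le> C / M"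
proof -
  obtain B where B: "\<And>y. y \<in> {a..b} \<Longrightarrow> \<bar>f' y\<bar> \<le> B"
    using compact_imp_bounded[OF compact_continuous_image[OF cont_f' compact_Icc]]
    unfolding bounded_iff by fastforce
  have "\<bar>integral {a..b} (\<lambda>y. f y * cos (M * y + \<theta>))\<bar> \<le> (\<bar>f a\<bar> + \<bar>f b\<bar> + B * (b - a)) / M"
    if M: "M > 0" for M
  proof -
    define P where "P y = f y * sin (M * y + \<theta>) / M" for y
    define R where "R y = f' y * sin (M * y + \<theta>) / M" for y
    have cont_R: "continuous_on {a..b} R"
      unfolding R_def using cont_f' M by (auto intro!: continuous_intros)
    have "(P has_real_derivative R y + f y * cos (M * y + \<theta>)) (at y within {a..b})"
      if "y \<in> {a..b}" for y
      unfolding P_def R_def using f'[OF that] M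
      by (auto intro!: derivative_eq_intros simp: field_simps)
    then have "((\<lambda>y. R y + f y * cos (M * y + \<theta>)) has_integral P b - P a) {a..b}"
      by (intro fundamental_theorem_of_calculus[OF ab])
         (simp add: has_real_derivative_iff_has_vector_derivative[symmetric])
    from has_integral_diff[OF this integrable_integral[OF integrable_continuous_interval[OF cont_R]]]
    have parts: "integral {a..b} (\<lambda>y. f y * cos (M * y + \<theta>)) = P b - P a - integral {a..b} R"
      by (simp add: integral_unique)
    have "norm (integral {a..b} R) \<le> B / M * (b - a)"
    proof (rule integral_bound[OF ab cont_R])
      fix y assume "y \<in> {a..b}"
      then have "\<bar>f' y * sin (M * y + \<theta>)\<bar> \<le> B * 1"
        unfolding abs_mult using B abs_ge_zero[of "f' y"] by (intro mult_mono) force+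
      then show "norm (R y) \<le> B / M"
        unfolding R_def using M by (simp add: divide_right_mono)
    qed
    then have R_bound: "\<bar>integral {a..b} R\<bar> \<le> B * (b - a) / M"
      by simp
    have P_bound: "\<bar>P y\<bar> \<le> \<bar>f y\<bar> / M" for y
      unfolding P_def using M by (simp add: abs_mult divide_right_mono mult_left_le)
    show ?thesis
      unfolding parts add_divide_distrib using R_bound P_bound[of a] P_bound[of b] by linarith
  qed
  then show thesis by (rule that)
qed

lemma integral_mult_cos_approx:
  fixes f g :: "real \<Rightarrow> real"
  assumes ab: "a \<le> b" and cont: "continuous_on {a..b} f" "continuous_on {a..b} g"
    and approx: "\<And>y. y \<in> {a..b} \<Longrightarrow> \<bar>f y - g y\<bar> \<le> e"
  shows "\<bar>integral {a..b} (\<lambda>y. f y * cos (M * y + \<theta>)) - integral {a..b} (\<lambda>y. g y * cos (M * y + \<theta>))\<bar>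
    \<le> e * (b - a)"
proof -
  have "integral {a..b} (\<lambda>y. f y * cos (M * y + \<theta>)) - integral {a..b} (\<lambda>y. g y * cos (M * y + \<theta>))
      = integral {a..b} (\<lambda>y. f y * cos (M * y + \<theta>) - g y * cos (M * y + \<theta>))"
    using cont by (intro integral_diff[symmetric] integrable_continuous_interval continuous_intros)
  also have "\<dots> = integral {a..b} (\<lambda>y. (f y - g y) * cos (M * y + \<theta>))"
    by (simp add: left_diff_distrib)
  also have "norm \<dots> \<le> e * (b - a)"
  proof (rule integral_bound[OF ab])
    show "continuous_on {a..b} (\<lambda>y. (f y - g y) * cos (M * y + \<theta>))"
      using cont by (intro continuous_intros)
    fix y assume "y \<in> {a..b}"
    then have "\<bar>f y - g y\<bar> * \<bar>cos (M * y + \<theta>)\<bar> \<le> e * 1"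
      using approx abs_ge_zero[of "f y - g y"] by (intro mult_mono) force+
    then show "norm ((f y - g y) * cos (M * y + \<theta>)) \<le> e"
      by (simp add: abs_mult)
  qed
  finally show ?thesis
    by simp
qed

lemma riemann_lebesgue:
  fixes f :: "real \<Rightarrow> real"
  assumes cont_f: "continuous_on {a..b} f"
  shows "((\<lambda>M. integral {a..b} (\<lambda>y. f y * cos (M * y + \<theta>))) \<longlongrightarrow> 0) at_top"
proof (cases "a \<le> b")
  case False
  then show ?thesis by simp
next
  case ab: True
  show ?thesis
  proof (rule tendstoI)
    fix r :: real
    assume r: "r > 0"
    define e where "e = r / (2 * (b - a + 1))"
    have e: "e > 0" "e * (b - a) < r / 2"
      using r ab by (auto simp: e_def field_simps)
    obtain p where p: "polynomial_function p" "\<And>y. y \<in> {a..b} \<Longrightarrow> \<bar>f y - p y\<bar> < e"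
      using Stone_Weierstrass_polynomial_function[OF compact_Icc cont_f e(1)] by auto
    obtain p' where p': "polynomial_function p'" "\<And>y. (p has_vector_derivative p' y) (at y)"
      using has_vector_derivative_polynomial_function[OF p(1)] by blast
    obtain C where C: "\<And>M. M > 0 \<Longrightarrow> \<bar>integral {a..b} (\<lambda>y. p y * cos (M * y + \<theta>))\<bar> \<le> C / M"
    proof (rule integral_mult_cos_bound[OF ab])
      show "(p has_real_derivative p' y) (at y within {a..b})" for y
        using p'(2) by (simp add: has_real_derivative_iff_has_vector_derivative has_vector_derivative_at_within)
    qed (use p'(1) continuous_on_polymonial_function in auto)
    have "((\<lambda>M. C / M) \<longlongrightarrow> 0) at_top"
      by (intro tendsto_divide_0[OF tendsto_const] filterlim_at_top_imp_at_infinity filterlim_ident)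
    then have "\<forall>\<^sub>F M in at_top. C / M < r / 2"
      using r by (intro order_tendstoD(2)) auto
    moreover have "\<forall>\<^sub>F M in at_top. (M::real) > 0"
      by (rule eventually_gt_at_top)
    ultimately show "\<forall>\<^sub>F M in at_top. dist (integral {a..b} (\<lambda>y. f y * cos (M * y + \<theta>))) 0 < r"
    proof eventually_elim
      case (elim M)
      have "\<bar>integral {a..b} (\<lambda>y. f y * cos (M * y + \<theta>)) - integral {a..b} (\<lambda>y. p y * cos (M * y + \<theta>))\<bar>
          \<le> e * (b - a)"
        using ab cont_f continuous_on_polymonial_function[OF p(1)] p(2)
        by (intro integral_mult_cos_approx) (auto intro: less_imp_le)
      then show ?case
        unfolding dist_real_def diff_zero
        using C[OF elim(2)] elim(1) e(2)
          abs_triangle_ineq2[of "integral {a..b} (\<lambda>y. f y * cos (M * y + \<theta>))"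
            "integral {a..b} (\<lambda>y. p y * cos (M * y + \<theta>))"]
        by linarith
    qed
  qed
qed

lemma riemann_lebesgue_sequentially:
  fixes f :: "real \<Rightarrow> real"
  assumes "continuous_on {a..b} f"
  shows "(\<lambda>N. integral {a..b} (\<lambda>y. f y * cos ((real N + c) * y + \<theta>))) \<longlonglongrightarrow> 0"
proof -
  have "filterlim (\<lambda>N. c + real N) at_top sequentially"
    by (rule filterlim_tendsto_add_at_top[OF tendsto_const filterlim_real_sequentially])
  from filterlim_compose[OF riemann_lebesgue[OF assms] this] show ?thesis
    by (simp add: add.commute)
qed

definition sin_ratio :: "real \<Rightarrow> real \<Rightarrow> real" where
  "sin_ratio a t = (if t = 0 then a else sin (a * t) / sin t)"

lemma continuous_on_sin_ratio:
  assumes "continuous_on S f" and "\<And>t. t \<in> S \<Longrightarrow> \<bar>f t\<bar> < pi"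
  shows "continuous_on S (\<lambda>t. sin_ratio a (f t))"
proof -
  have sinc_nz: "sinc (f t) \<noteq> 0" if "t \<in> S" for t
    using sin_zero_pi_iff[OF assms(2)[OF that]] by (cases "f t = 0") auto
  have "sin_ratio a (f t) = a * sinc (a * f t) / sinc (f t)" if "t \<in> S" for t
    using sinc_nz[OF that] by (cases "a * f t = 0") (auto simp: sin_ratio_def field_simps)
  moreover have "continuous_on S (\<lambda>t. a * sinc (a * f t) / sinc (f t))"
    using assms(1) sinc_nz by (intro continuous_on_divide continuous_on_mult continuous_on_const continuous_on_sinc) auto
  ultimately show ?thesis
    using continuous_on_eq[of S "\<lambda>t. a * sinc (a * f t) / sinc (f t)" "\<lambda>t. sin_ratio a (f t)"]
    by metis
qed

lemma sin_add_diff_sin_div: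
  assumes "y \<noteq> 0"
  shows "(sin (c * y + \<mu> * y + \<theta>) - sin (c * y + \<theta>)) / (2 * sin (y / 2))
    = sin_ratio \<mu> (y / 2) * cos ((c + \<mu> / 2) * y + \<theta>)"
proof -
  have "sin (c * y + \<mu> * y + \<theta>) - sin (c * y + \<theta>) = 2 * sin (\<mu> * (y / 2)) * cos ((c + \<mu> / 2) * y + \<theta>)"
    unfolding sin_diff_sin by (simp add: field_simps)
  then show ?thesis
    using assms by (simp add: sin_ratio_def)
qed

lemma sum_cos_telescoping:
  "2 * sin (y / 2) * (\<Sum>k<N. cos ((real k + 1) * y + \<phi>))
    = sin ((real N + 1/2) * y + \<phi>) - sin (y / 2 + \<phi>)"
proof (induction N)
  case 0
  then show ?case by simp
next
  case (Suc N)
  define w z where "w = (real (Suc N) + 1/2) * y + \<phi>" and "z = (real N + 1/2) * y + \<phi>"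
  have half_diff: "(w - z) / 2 = y / 2" and half_sum: "(w + z) / 2 = (real N + 1) * y + \<phi>"
    unfolding w_def z_def by (simp_all add: field_simps)
  have "sin w - sin z = 2 * sin (y / 2) * cos ((real N + 1) * y + \<phi>)"
    unfolding sin_diff_sin half_diff half_sum ..
  with Suc show ?case
    unfolding w_def z_def by (simp add: distrib_left)
qed

definition shifted_sine_sum :: "real \<Rightarrow> real \<Rightarrow> nat \<Rightarrow> real \<Rightarrow> real" where
  "shifted_sine_sum \<mu> \<theta> N y = (\<Sum>k<N. sin ((real k + 1 + \<mu>) * y + \<theta>) / (real k + 1 + \<mu>))"

lemma has_real_derivative_shifted_sine_sum:
  assumes "\<mu> > -1"
  shows "(shifted_sine_sum \<mu> \<theta> N has_real_derivative (\<Sum>k<N. cos ((real k + 1 + \<mu>) * y + \<theta>))) (at y)"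
  unfolding shifted_sine_sum_def[abs_def]
proof (rule DERIV_sum)
  fix k
  define c where "c = real k + 1 + \<mu>"
  have "c \<noteq> 0"
    using assms by (simp add: c_def)
  have "((\<lambda>y. sin (c * y + \<theta>)) has_real_derivative cos (c * y + \<theta>) * c) (at y)"
    by (auto intro!: derivative_eq_intros)
  from DERIV_cdivide[OF this, of c] \<open>c \<noteq> 0\<close>
  show "((\<lambda>y. sin (c * y + \<theta>) / c) has_real_derivative cos (c * y + \<theta>)) (at y)"
    by simp
qed

lemma sum_cos_shifted_eq:
  assumes "sin (y / 2) \<noteq> 0"
  shows "(\<Sum>k<N. cos ((real k + 1 + \<mu>) * y + \<theta>))
    = (sin ((real N + \<mu> + 1/2) * y + \<theta>) - sin ((\<mu> + 1/2) * y + \<theta>)) / (2 * sin (y / 2))"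
proof -
  have "(\<Sum>k<N. cos ((real k + 1 + \<mu>) * y + \<theta>)) = (\<Sum>k<N. cos ((real k + 1) * y + (\<mu> * y + \<theta>)))"
    and "(real N + 1/2) * y + (\<mu> * y + \<theta>) = (real N + \<mu> + 1/2) * y + \<theta>"
    and "y / 2 + (\<mu> * y + \<theta>) = (\<mu> + 1/2) * y + \<theta>"
    by (simp_all add: algebra_simps)
  with sum_cos_telescoping[where \<phi> = "\<mu> * y + \<theta>" and y = y and N = N] assms show ?thesis
    by (simp add: field_simps)
qed

lemma has_integral_shifted_sine_sum:
  assumes "\<mu> > -1" and "u \<le> v" and "\<And>y. y \<in> {u<..<v} \<Longrightarrow> sin (y / 2) \<noteq> 0"
  shows "((\<lambda>y. (sin ((real N + \<mu> + 1/2) * y + \<theta>) - sin ((\<mu> + 1/2) * y + \<theta>)) / (2 * sin (y / 2)))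
           has_integral shifted_sine_sum \<mu> \<theta> N v - shifted_sine_sum \<mu> \<theta> N u) {u..v}"
proof (rule fundamental_theorem_of_calculus_interior[OF assms(2)])
  show "continuous_on {u..v} (shifted_sine_sum \<mu> \<theta> N)"
    using has_real_derivative_shifted_sine_sum[OF assms(1)]
    by (intro continuous_at_imp_continuous_on) (blast intro: DERIV_isCont)
next
  fix y assume "y \<in> {u<..<v}"
  then have "sin (y / 2) \<noteq> 0"
    by (rule assms(3))
  from has_real_derivative_shifted_sine_sum[OF assms(1)] sum_cos_shifted_eq[OF this]
  show "(shifted_sine_sum \<mu> \<theta> N has_vector_derivative
      (sin ((real N + \<mu> + 1/2) * y + \<theta>) - sin ((\<mu> + 1/2) * y + \<theta>)) / (2 * sin (y / 2))) (at y)"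
    by (metis has_real_derivative_iff_has_vector_derivative)
qed

lemma shifted_sine_sum_increment_tendsto:
  assumes "\<mu> > -1" and "0 < u" and "u \<le> v" and "v < 2 * pi"
  shows "(\<lambda>N. shifted_sine_sum \<mu> \<theta> N v - shifted_sine_sum \<mu> \<theta> N u)
    \<longlonglongrightarrow> - integral {u..v} (\<lambda>y. sin ((\<mu> + 1/2) * y + \<theta>) / (2 * sin (y / 2)))"
proof -
  have sin_pos: "sin (y / 2) > 0" if "y \<in> {u..v}" for y
    using that assms by (intro sin_gt_zero) auto
  define w where "w y = 1 / (2 * sin (y / 2))" for y :: real
  define g where "g y = sin ((\<mu> + 1/2) * y + \<theta>) / (2 * sin (y / 2))" for y
  have cont_w: "continuous_on {u..v} w" and cont_g: "continuous_on {u..v} g"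
    unfolding w_def g_def using sin_pos by (intro continuous_intros; force)+
  have eq: "shifted_sine_sum \<mu> \<theta> N v - shifted_sine_sum \<mu> \<theta> N u
      = integral {u..v} (\<lambda>y. w y * cos ((real N + (\<mu> + 1/2)) * y + (\<theta> - pi/2))) - integral {u..v} g"
    for N
  proof -
    have "cos ((real N + (\<mu> + 1/2)) * y + (\<theta> - pi/2)) = sin ((real N + \<mu> + 1/2) * y + \<theta>)" for y
    proof -
      have arg: "(real N + (\<mu> + 1/2)) * y + (\<theta> - pi/2) = ((real N + \<mu> + 1/2) * y + \<theta>) - pi/2"
        by (simp add: algebra_simps)
      show ?thesis
        unfolding arg cos_diff by simp
    qed
    then have integrand_eq: "(\<lambda>y. (sin ((real N + \<mu> + 1/2) * y + \<theta>) - sin ((\<mu> + 1/2) * y + \<theta>)) / (2 * sin (y / 2)))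
        = (\<lambda>y. w y * cos ((real N + (\<mu> + 1/2)) * y + (\<theta> - pi/2)) - g y)"
      by (simp add: w_def g_def diff_divide_distrib)
    have sin_nz: "sin (y / 2) \<noteq> 0" if "y \<in> {u<..<v}" for y
      using sin_pos[of y] that by auto
    have "((\<lambda>y. (sin ((real N + \<mu> + 1/2) * y + \<theta>) - sin ((\<mu> + 1/2) * y + \<theta>)) / (2 * sin (y / 2)))
        has_integral shifted_sine_sum \<mu> \<theta> N v - shifted_sine_sum \<mu> \<theta> N u) {u..v}"
      by (rule has_integral_shifted_sine_sum[OF assms(1,3) sin_nz])
    then have "shifted_sine_sum \<mu> \<theta> N v - shifted_sine_sum \<mu> \<theta> N u
        = integral {u..v} (\<lambda>y. w y * cos ((real N + (\<mu> + 1/2)) * y + (\<theta> - pi/2)) - g y)"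
      unfolding integrand_eq by (rule integral_unique[symmetric])
    also have "\<dots> = integral {u..v} (\<lambda>y. w y * cos ((real N + (\<mu> + 1/2)) * y + (\<theta> - pi/2))) - integral {u..v} g"
      using cont_w cont_g by (intro integral_diff integrable_continuous_interval continuous_intros)
    finally show ?thesis .
  qed
  have "(\<lambda>N. integral {u..v} (\<lambda>y. w y * cos ((real N + (\<mu> + 1/2)) * y + (\<theta> - pi/2)))) \<longlonglongrightarrow> 0"
    using cont_w by (rule riemann_lebesgue_sequentially)
  from tendsto_diff[OF this tendsto_const[of "integral {u..v} g"]] show ?thesis
    unfolding eq g_def by simp
qed

lemma shifted_sine_sum_sub_unshifted_tendsto:
  assumes "\<mu> > -1" and "0 < x" and "x < 2 * pi"
  shows "(\<lambda>N. (shifted_sine_sum \<mu> \<theta> N x - shifted_sine_sum \<mu> \<theta> N 0)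
             - (shifted_sine_sum 0 \<theta> N x - shifted_sine_sum 0 \<theta> N 0))
    \<longlonglongrightarrow> - integral {0..x} (\<lambda>y. sin_ratio \<mu> (y / 2) * cos ((\<mu> + 1) / 2 * y + \<theta>))"
proof -
  define w where "w y = sin_ratio \<mu> (y / 2)" for y
  have cont_w: "continuous_on {0..x} w"
    unfolding w_def using assms by (intro continuous_on_sin_ratio continuous_intros) auto
  have eq: "(shifted_sine_sum \<mu> \<theta> N x - shifted_sine_sum \<mu> \<theta> N 0)
      - (shifted_sine_sum 0 \<theta> N x - shifted_sine_sum 0 \<theta> N 0)
      = integral {0..x} (\<lambda>y. w y * cos ((real N + (\<mu> + 1) / 2) * y + \<theta>))
        - integral {0..x} (\<lambda>y. w y * cos ((\<mu> + 1) / 2 * y + \<theta>))" for N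
  proof -
    have pointwise: "w y * cos ((real N + (\<mu> + 1) / 2) * y + \<theta>) - w y * cos ((\<mu> + 1) / 2 * y + \<theta>)
        = (sin ((real N + \<mu> + 1/2) * y + \<theta>) - sin ((\<mu> + 1/2) * y + \<theta>)) / (2 * sin (y / 2))
          - (sin ((real N + 0 + 1/2) * y + \<theta>) - sin ((0 + 1/2) * y + \<theta>)) / (2 * sin (y / 2))"
      if "y \<in> {0..x} - {0}" for y
    proof -
      have "y \<noteq> 0"
        using that by simp
      from sin_add_diff_sin_div[OF this, of "real N + 1/2" \<mu> \<theta>] sin_add_diff_sin_div[OF this, of "1/2" \<mu> \<theta>]
      show ?thesis
        by (simp add: w_def diff_divide_distrib algebra_simps add_divide_distrib)
    qed
    have "sin (y / 2) \<noteq> 0" if "y \<in> {0<..<x}" for y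
      using that assms sin_gt_zero[of "y / 2"] by auto
    then have "((\<lambda>y. (sin ((real N + \<mu> + 1/2) * y + \<theta>) - sin ((\<mu> + 1/2) * y + \<theta>)) / (2 * sin (y / 2))
        - (sin ((real N + 0 + 1/2) * y + \<theta>) - sin ((0 + 1/2) * y + \<theta>)) / (2 * sin (y / 2)))
        has_integral (shifted_sine_sum \<mu> \<theta> N x - shifted_sine_sum \<mu> \<theta> N 0)
          - (shifted_sine_sum 0 \<theta> N x - shifted_sine_sum 0 \<theta> N 0)) {0..x}"
      using assms by (intro has_integral_diff has_integral_shifted_sine_sum) auto
    from has_integral_spike_finite[where S = "{0}", OF _ pointwise this]
    have "(shifted_sine_sum \<mu> \<theta> N x - shifted_sine_sum \<mu> \<theta> N 0)
        - (shifted_sine_sum 0 \<theta> N x - shifted_sine_sum 0 \<theta> N 0)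
        = integral {0..x} (\<lambda>y. w y * cos ((real N + (\<mu> + 1) / 2) * y + \<theta>) - w y * cos ((\<mu> + 1) / 2 * y + \<theta>))"
      by (simp add: integral_unique)
    also have "\<dots> = integral {0..x} (\<lambda>y. w y * cos ((real N + (\<mu> + 1) / 2) * y + \<theta>))
        - integral {0..x} (\<lambda>y. w y * cos ((\<mu> + 1) / 2 * y + \<theta>))"
      using cont_w by (intro integral_diff integrable_continuous_interval continuous_intros)
    finally show ?thesis .
  qed
  have "(\<lambda>N. integral {0..x} (\<lambda>y. w y * cos ((real N + (\<mu> + 1) / 2) * y + \<theta>))) \<longlonglongrightarrow> 0"
    using cont_w by (rule riemann_lebesgue_sequentially)
  from tendsto_diff[OF this tendsto_const[of "integral {0..x} (\<lambda>y. w y * cos ((\<mu> + 1) / 2 * y + \<theta>))"]]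
  show ?thesis
    unfolding eq w_def by simp
qed

lemma shifted_sine_sum_at_zero [simp]: "shifted_sine_sum \<mu> 0 N 0 = 0"
  by (simp add: shifted_sine_sum_def)

lemma sine_series_tendsto:
  assumes "0 < x" and "x < 2 * pi"
  shows "(\<lambda>N. shifted_sine_sum 0 0 N x) \<longlonglongrightarrow> (pi - x) / 2"
proof -
  have at_pi: "shifted_sine_sum 0 0 N pi = 0" for N
  proof -
    have "sin ((real k + 1 + 0) * pi + 0) = 0" for k
      using sin_npi[of "Suc k"] by (simp add: add.commute)
    then show ?thesis
      by (simp add: shifted_sine_sum_def)
  qed
  have half: "integral {a..b} (\<lambda>y. sin ((0 + 1/2) * y + 0) / (2 * sin (y / 2))) = (b - a) / 2"
    if ab: "0 < a" "a \<le> b" "b < 2 * pi" for a b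
  proof -
    have "sin (y / 2) > 0" if "y \<in> {a..b}" for y
      using that ab by (intro sin_gt_zero) auto
    then have "integral {a..b} (\<lambda>y. sin ((0 + 1/2) * y + 0) / (2 * sin (y / 2))) = integral {a..b} (\<lambda>_. 1 / 2)"
      by (intro integral_cong) force
    then show ?thesis
      using ab by simp
  qed
  show ?thesis
  proof (cases "x \<le> pi")
    case True
    have integral_eq: "integral {x..pi} (\<lambda>y. sin ((0 + 1/2) * y + 0) / (2 * sin (y / 2))) = (pi - x) / 2"
      using True assms by (intro half) auto
    have "(\<lambda>N. shifted_sine_sum 0 0 N pi - shifted_sine_sum 0 0 N x)
        \<longlonglongrightarrow> - integral {x..pi} (\<lambda>y. sin ((0 + 1/2) * y + 0) / (2 * sin (y / 2)))"
      using True assms by (intro shifted_sine_sum_increment_tendsto) auto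
    then have "(\<lambda>N. - shifted_sine_sum 0 0 N x) \<longlonglongrightarrow> - ((pi - x) / 2)"
      unfolding integral_eq at_pi by simp
    from tendsto_minus[OF this] show ?thesis
      by simp
  next
    case False
    have integral_eq: "integral {pi..x} (\<lambda>y. sin ((0 + 1/2) * y + 0) / (2 * sin (y / 2))) = (x - pi) / 2"
      using False assms by (intro half) auto
    have "(\<lambda>N. shifted_sine_sum 0 0 N x - shifted_sine_sum 0 0 N pi)
        \<longlonglongrightarrow> - integral {pi..x} (\<lambda>y. sin ((0 + 1/2) * y + 0) / (2 * sin (y / 2)))"
      using False assms by (intro shifted_sine_sum_increment_tendsto) auto
    moreover have "- ((x - pi) / 2) = (pi - x) / 2"
      by (simp only: minus_divide_left minus_diff_eq)
    ultimately show ?thesis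
      unfolding integral_eq at_pi diff_zero by argo
  qed
qed

lemma integral_sin_div_sin_half_eq:
  assumes "0 < x" and "x < 2 * pi"
  shows "integral {0..x} (\<lambda>y. sin ((\<mu> + 1/2) * y) / (2 * sin (y / 2)))
    = x / 2 + integral {0..x} (\<lambda>y. sin_ratio \<mu> (y / 2) * cos ((\<mu> + 1) / 2 * y + 0))"
proof -
  define h where "h y = 1 / 2 + sin_ratio \<mu> (y / 2) * cos ((\<mu> + 1) / 2 * y + 0)" for y
  have "continuous_on {0..x} (\<lambda>y. sin_ratio \<mu> (y / 2) * cos ((\<mu> + 1) / 2 * y + 0))"
    using assms by (intro continuous_on_sin_ratio continuous_intros) auto
  then have "((\<lambda>y. sin_ratio \<mu> (y / 2) * cos ((\<mu> + 1) / 2 * y + 0)) has_integral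
      integral {0..x} (\<lambda>y. sin_ratio \<mu> (y / 2) * cos ((\<mu> + 1) / 2 * y + 0))) {0..x}"
    by (intro integrable_integral integrable_continuous_interval)
  moreover have "((\<lambda>_. 1 / 2) has_integral x / 2) {0..x}"
    using has_integral_const_real[of "1 / 2 :: real" 0 x] assms by simp
  ultimately have h_int: "(h has_integral x / 2 + integral {0..x} (\<lambda>y. sin_ratio \<mu> (y / 2) * cos ((\<mu> + 1) / 2 * y + 0))) {0..x}"
    unfolding h_def by (rule has_integral_add[rotated])
  have pointwise: "sin ((\<mu> + 1/2) * y) / (2 * sin (y / 2)) = h y" if "y \<in> {0..x} - {0}" for y
  proof -
    have "sin (y / 2) \<noteq> 0" and "y \<noteq> 0"
      using that assms sin_gt_zero[of "y / 2"] by auto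
    have args: "1/2 * y + \<mu> * y + 0 = (\<mu> + 1/2) * y" "1/2 * y + 0 = y / 2"
      by (simp_all add: algebra_simps)
    have "sin ((\<mu> + 1/2) * y) / (2 * sin (y / 2))
        = (sin (1/2 * y + \<mu> * y + 0) - sin (1/2 * y + 0)) / (2 * sin (y / 2)) + 1 / 2"
      unfolding args diff_divide_distrib using \<open>sin (y / 2) \<noteq> 0\<close> by simp
    also have "\<dots> = h y"
      using sin_add_diff_sin_div[OF \<open>y \<noteq> 0\<close>, of "1/2" \<mu> 0]
      unfolding h_def by (simp add: add_divide_distrib add.commute)
    finally show ?thesis .
  qed
  show ?thesis
    by (rule integral_unique, rule has_integral_spike_finite[where S = "{0}", OF _ pointwise h_int]) simp
qed

lemma shifted_sine_sum_tendsto: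
  assumes "\<mu> > -1" and "0 < x" and "x < 2 * pi"
  shows "(\<lambda>N. shifted_sine_sum \<mu> 0 N x)
    \<longlonglongrightarrow> pi / 2 - integral {0..x} (\<lambda>y. sin ((\<mu> + 1/2) * y) / (2 * sin (y / 2)))"
proof -
  have "(\<lambda>N. shifted_sine_sum 0 0 N x + ((shifted_sine_sum \<mu> 0 N x - shifted_sine_sum \<mu> 0 N 0)
      - (shifted_sine_sum 0 0 N x - shifted_sine_sum 0 0 N 0)))
      \<longlonglongrightarrow> (pi - x) / 2 + - integral {0..x} (\<lambda>y. sin_ratio \<mu> (y / 2) * cos ((\<mu> + 1) / 2 * y + 0))"
    by (intro tendsto_add sine_series_tendsto shifted_sine_sum_sub_unshifted_tendsto assms)
  moreover have "(\<lambda>N. shifted_sine_sum 0 0 N x + ((shifted_sine_sum \<mu> 0 N x - shifted_sine_sum \<mu> 0 N 0)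
      - (shifted_sine_sum 0 0 N x - shifted_sine_sum 0 0 N 0))) = (\<lambda>N. shifted_sine_sum \<mu> 0 N x)"
    by simp
  moreover have "(pi - x) / 2 + - integral {0..x} (\<lambda>y. sin_ratio \<mu> (y / 2) * cos ((\<mu> + 1) / 2 * y + 0))
      = pi / 2 - (x / 2 + integral {0..x} (\<lambda>y. sin_ratio \<mu> (y / 2) * cos ((\<mu> + 1) / 2 * y + 0)))"
    by argo
  ultimately show ?thesis
    unfolding integral_sin_div_sin_half_eq[OF assms(2,3)] by argo
qed

lemma summable_alternating_shifted_harmonic:
  assumes "\<mu> > -1"
  shows "summable (\<lambda>k. (-1) ^ k * (1 / (real k + 1 + \<mu>)))"
proof (rule summable_Leibniz'(1))
  have "filterlim (\<lambda>k. (1 + \<mu>) + real k) at_top sequentially"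
    by (rule filterlim_tendsto_add_at_top[OF tendsto_const filterlim_real_sequentially])
  then show "(\<lambda>k. 1 / (real k + 1 + \<mu>)) \<longlonglongrightarrow> 0"
    by (intro tendsto_divide_0[OF tendsto_const] filterlim_at_top_imp_at_infinity) (simp add: algebra_simps)
  show "0 \<le> 1 / (real k + 1 + \<mu>)" for k
    using assms by simp
  show "1 / (real (Suc k) + 1 + \<mu>) \<le> 1 / (real k + 1 + \<mu>)" for k
    using assms by (intro divide_left_mono) auto
qed

lemma cos_Suc_pi_div: "cos (real (Suc k) * pi) / (real (Suc k) + \<mu>) = - ((-1) ^ k * (1 / (real k + 1 + \<mu>)))"
  by (simp only: cos_npi) (simp add: add.commute)

lemma FJ_T_pi_sums:
  assumes "\<mu> > -1"
  shows "(\<lambda>k. cos (real (Suc k) * pi) / (real (Suc k) + \<mu>)) sums FJ_T pi \<mu>"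
  unfolding FJ_T_def cos_Suc_pi_div
  using summable_minus[OF summable_alternating_shifted_harmonic[OF assms]] by (simp add: summable_sums)

lemma FJ_T_pi_eq_S_half_pi:
  assumes "\<mu> > -1"
  shows "FJ_T pi \<mu> = - S_half_pi (2 * \<mu> + 1)"
proof -
  note summable = summable_alternating_shifted_harmonic[OF assms]
  have "S_half_pi (2 * \<mu> + 1) = 2 * (\<Sum>k. 1 / 2 * ((-1) ^ k * (1 / (real k + 1 + \<mu>))))"
    unfolding S_half_pi_def by (simp add: field_simps)
  also have "\<dots> = (\<Sum>k. (-1) ^ k * (1 / (real k + 1 + \<mu>)))"
    using suminf_mult[OF summable, of "1 / 2"] by simp
  finally show ?thesis
    unfolding FJ_T_def cos_Suc_pi_div using suminf_minus[OF summable] by simp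
qed

lemma shifted_sine_sum_pi_tendsto:
  assumes "\<mu> > -1"
  shows "(\<lambda>N. shifted_sine_sum \<mu> (pi / 2) N pi) \<longlonglongrightarrow> cos (pi * \<mu>) * FJ_T pi \<mu>"
proof -
  have "sin ((real k + 1 + \<mu>) * pi + pi / 2) = cos (pi * \<mu>) * cos (real (Suc k) * pi)" for k
  proof -
    have "(real k + 1 + \<mu>) * pi + pi / 2 = (real (Suc k) * pi + pi * \<mu>) + pi / 2"
      by (simp add: algebra_simps)
    then have "sin ((real k + 1 + \<mu>) * pi + pi / 2) = cos (real (Suc k) * pi + pi * \<mu>)"
      unfolding sin_add by simp
    then show ?thesis
      unfolding cos_add sin_npi by simp
  qed
  then have "(\<lambda>N. shifted_sine_sum \<mu> (pi / 2) N pi)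
      = (\<lambda>N. cos (pi * \<mu>) * (\<Sum>k<N. cos (real (Suc k) * pi) / (real (Suc k) + \<mu>)))"
    unfolding shifted_sine_sum_def sum_distrib_left by (simp add: add.commute)
  then show ?thesis
    using tendsto_mult_left[OF FJ_T_pi_sums[OF assms, unfolded sums_def]] by (simp only:)
qed

lemma shifted_cosine_sum_tendsto:
  assumes "\<mu> > -1" and "0 < x" and "x < 2 * pi"
  shows "(\<lambda>N. shifted_sine_sum \<mu> (pi / 2) N x) \<longlonglongrightarrow> cos (pi * \<mu>) * FJ_T pi \<mu>
    + (if x \<le> pi then integral {x..pi} (\<lambda>y. cos ((\<mu> + 1/2) * y) / (2 * sin (y / 2)))
       else - integral {pi..x} (\<lambda>y. cos ((\<mu> + 1/2) * y) / (2 * sin (y / 2))))"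
proof -
  have integrand_eq: "(\<lambda>y. sin ((\<mu> + 1/2) * y + pi / 2) / (2 * sin (y / 2)))
      = (\<lambda>y. cos ((\<mu> + 1/2) * y) / (2 * sin (y / 2)))"
    by (simp add: sin_add)
  note at_pi = shifted_sine_sum_pi_tendsto[OF assms(1)]
  show ?thesis
  proof (cases "x \<le> pi")
    case True
    have "(\<lambda>N. shifted_sine_sum \<mu> (pi / 2) N pi - shifted_sine_sum \<mu> (pi / 2) N x)
        \<longlonglongrightarrow> - integral {x..pi} (\<lambda>y. sin ((\<mu> + 1/2) * y + pi / 2) / (2 * sin (y / 2)))"
      using True assms by (intro shifted_sine_sum_increment_tendsto) auto
    from tendsto_diff[OF at_pi this[unfolded integrand_eq]] True show ?thesis
      by simp
  next
    case False
    have "(\<lambda>N. shifted_sine_sum \<mu> (pi / 2) N x - shifted_sine_sum \<mu> (pi / 2) N pi)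
        \<longlonglongrightarrow> - integral {pi..x} (\<lambda>y. sin ((\<mu> + 1/2) * y + pi / 2) / (2 * sin (y / 2)))"
      using False assms by (intro shifted_sine_sum_increment_tendsto) auto
    from tendsto_add[OF at_pi this[unfolded integrand_eq]] False show ?thesis
      by simp
  qed
qed

lemma exp_mult_FJ_L_eq_Complex:
  assumes "(\<lambda>N. shifted_sine_sum \<mu> (pi / 2) N x) \<longlonglongrightarrow> a"
    and "(\<lambda>N. shifted_sine_sum \<mu> 0 N x) \<longlonglongrightarrow> b"
  shows "exp (\<i> * of_real (x * \<mu>)) * FJ_L x \<mu> = Complex a b"
proof -
  define z where "z = exp (\<i> * of_real (x * \<mu>))"
  define P where "P N = (\<Sum>k<N. exp (\<i> * of_real (real (Suc k) * x)) / of_real (real (Suc k) + \<mu>))" for N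
  have "z * (exp (\<i> * of_real (real (Suc k) * x)) / of_real (real (Suc k) + \<mu>))
      = Complex (sin ((real k + 1 + \<mu>) * x + pi / 2) / (real k + 1 + \<mu>))
          (sin ((real k + 1 + \<mu>) * x + 0) / (real k + 1 + \<mu>))" for k
  proof -
    have "z * exp (\<i> * of_real (real (Suc k) * x)) = cis ((real k + 1 + \<mu>) * x)"
      unfolding z_def cis_conv_exp exp_add[symmetric] by (simp add: algebra_simps)
    then show ?thesis
      by (simp add: complex_eq_iff sin_add Re_divide_of_real Im_divide_of_real add_ac)
  qed
  then have "z * P N = Complex (shifted_sine_sum \<mu> (pi / 2) N x) (shifted_sine_sum \<mu> 0 N x)" for N
    unfolding P_def sum_distrib_left shifted_sine_sum_def by (simp add: complex_eq_iff Re_sum Im_sum)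
  then have "(\<lambda>N. z * P N) \<longlonglongrightarrow> Complex a b"
    by (simp add: tendsto_Complex assms)
  from tendsto_mult_left[OF this, of "inverse z"]
  have "P \<longlonglongrightarrow> inverse z * Complex a b"
    by (simp add: z_def field_simps)
  then have "(\<lambda>k. exp (\<i> * of_real (real (Suc k) * x)) / of_real (real (Suc k) + \<mu>))
      sums (inverse z * Complex a b)"
    unfolding sums_def P_def .
  then have "FJ_L x \<mu> = inverse z * Complex a b"
    unfolding FJ_L_def by (rule sums_unique[symmetric])
  then show ?thesis
    unfolding z_def by simp
qed

theorem proposition7:
  fixes \<mu> x :: real
  assumes "\<mu> > -1" and "0 < x" and "x < 2 * pi"
  shows "(Im (exp (\<i> * of_real (x * \<mu>)) * FJ_L x \<mu>)
           + integral {0..x} (\<lambda>y. sin ((\<mu> + 1/2) * y) / (2 * sin (y / 2))) = pi / 2)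
    \<and> (Re (exp (\<i> * of_real (x * \<mu>)) * FJ_L x \<mu>)
           - (if x \<le> pi then integral {x..pi} (\<lambda>y. cos ((\<mu> + 1/2) * y) / (2 * sin (y / 2)))
              else - integral {pi..x} (\<lambda>y. cos ((\<mu> + 1/2) * y) / (2 * sin (y / 2))))
         = Re (exp (\<i> * of_real (pi * \<mu>)) * of_real (FJ_T pi \<mu>)))
    \<and> (Re (exp (\<i> * of_real (pi * \<mu>)) * of_real (FJ_T pi \<mu>))
         = - S_half_pi (2 * \<mu> + 1) * cos (pi * \<mu>))"
proof -
  have Re_T: "Re (exp (\<i> * of_real (pi * \<mu>)) * of_real (FJ_T pi \<mu>)) = cos (pi * \<mu>) * FJ_T pi \<mu>"
    unfolding cis_conv_exp[symmetric] by simp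
  have "exp (\<i> * of_real (x * \<mu>)) * FJ_L x \<mu>
      = Complex (cos (pi * \<mu>) * FJ_T pi \<mu>
          + (if x \<le> pi then integral {x..pi} (\<lambda>y. cos ((\<mu> + 1/2) * y) / (2 * sin (y / 2)))
             else - integral {pi..x} (\<lambda>y. cos ((\<mu> + 1/2) * y) / (2 * sin (y / 2)))))
        (pi / 2 - integral {0..x} (\<lambda>y. sin ((\<mu> + 1/2) * y) / (2 * sin (y / 2))))"
    using assms by (intro exp_mult_FJ_L_eq_Complex shifted_cosine_sum_tendsto shifted_sine_sum_tendsto)
  then show ?thesis
    unfolding Re_T using FJ_T_pi_eq_S_half_pi[OF assms(1)] by simp
qed

end
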